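(* Let $p$ be a prime, $k$ an algebraically closed field of characteristic $p$, $a\in\mathbb N$ and $n\in\mathbb N$. Then the monomial $X^a$ lies in $\Sigma_n$ if and only if $S_p(a)\le n$. Consequently $\min\{n\in\mathbb N:X^a\in\Sigma_n\}=S_p(a)$.
   Context: An additive polynomial in $k[X]$ is a $k$-linear combination of the monomials $X^{p^j}$, $j\ge0$. For $t\ge1$, $\Sigma_t$ is the $k$-subspace of $k[X]$ spanned by $1$ and all products of at most $t$ additive polynomials; $\Sigma_0=k$. For $a\in\mathbb N$ with base-$p$ expansion $a=\sum_{i=0}^t a_ip^i$ ($0\le a_i\le p-1$), $S_p(a)=\sum_i a_i$ is the sum of its base-$p$ digits. *)

theory Defs
  imports "HOL-Computational_Algebra.Polynomial"
begin

definition additive_poly :: "nat \<Rightarrow> 'a::field poly \<Rightarrow> bool" where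
  "additive_poly p f \<longleftrightarrow> (\<exists>(c::nat \<Rightarrow> 'a) N. f = (\<Sum>j<N. monom (c j) (p ^ j)))"

definition Sigma :: "nat \<Rightarrow> nat \<Rightarrow> 'a::field poly set" where
  "Sigma p t = module.span smult
     (insert 1 {prod_list fs | fs. length fs \<le> t \<and> list_all (additive_poly p) fs})"

text \<open>Sum of base-p digits: the i-th digit of a is (a div p^i) mod p; digits beyond index a vanish.\<close>
definition digit_sum :: "nat \<Rightarrow> nat \<Rightarrow> nat" where
  "digit_sum p a = (\<Sum>i\<le>a. (a div p ^ i) mod p)"

end

theory Submission
  imports Defs
begin

(* Write S(a) for the base-p digit sum.  For every field k and p >= 2:
   - Upper bound: let D_n be the space of polynomials all of whose monomials X^b have
     S(b) <= n.  It is a subspace containing 1; additive polynomials lie in D_1 since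
     S(p^j) = 1; and D_s * D_t <= D_(s+t) because S is subadditive, S(b+c) <= S(b)+S(c)
     (carries only lower the digit sum).  Hence Sigma_n <= D_n, so X^a in Sigma_n
     forces S(a) <= n.
   - Lower bound: from a = sum_i a_i p^i we get X^a = prod_i (X^(p^i))^(a_i), a product
     of S(a) additive monomials, so X^a lies in Sigma_n whenever S(a) <= n. *)

interpretation poly_module: module "smult :: 'a::comm_ring_1 \<Rightarrow> 'a poly \<Rightarrow> 'a poly"
  by standard (simp_all add: smult_add_right smult_add_left)

section \<open>Base-p digit sums\<close>

text \<open>The digit positions 0..a suffice to write a in base p.\<close>
lemma less_pow_Suc_self:
  assumes p: "p \<ge> 2"
  shows "(a::nat) < p ^ Suc a"
proof -
  have "a < 2 ^ a" by (rule less_exp)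
  also have "\<dots> \<le> p ^ a" using p by (simp add: power_mono)
  also have "\<dots> \<le> p ^ Suc a" using p by simp
  finally show ?thesis .
qed

lemma digit_sum_eq_sum_below:
  assumes p: "p \<ge> 2" and a_less: "a < p ^ K"
  shows "digit_sum p a = (\<Sum>i<K. (a div p ^ i) mod p)"
proof -
  have high_digit_zero: "(a div p ^ i) mod p = 0" if "K' \<le> i" "a < p ^ K'" for i K'
  proof -
    have "p ^ K' \<le> p ^ i" using that(1) p by (simp add: power_increasing)
    then show ?thesis using that(2) by simp
  qed
  have a_less_pow_a: "a < p ^ Suc a" by (rule less_pow_Suc_self[OF p])
  define M where "M = max K (Suc a)"
  have "digit_sum p a = (\<Sum>i<Suc a. (a div p ^ i) mod p)"
    unfolding digit_sum_def using lessThan_Suc_atMost by simp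
  also have "\<dots> = (\<Sum>i<M. (a div p ^ i) mod p)"
    by (rule sum.mono_neutral_left) (auto simp: M_def intro: high_digit_zero[OF _ a_less_pow_a])
  also have "\<dots> = (\<Sum>i<K. (a div p ^ i) mod p)"
    by (rule sum.mono_neutral_right) (auto simp: M_def intro: high_digit_zero[OF _ a_less])
  finally show ?thesis .
qed

lemma digit_sum_rec:
  assumes p: "p \<ge> 2"
  shows "digit_sum p a = a mod p + digit_sum p (a div p)"
proof -
  have a_less: "a < p ^ Suc a" by (rule less_pow_Suc_self[OF p])
  then have div_less: "a div p < p ^ a"
    using p by (simp add: div_less_iff_less_mult mult.commute)
  have "digit_sum p a = (\<Sum>i<Suc a. (a div p ^ i) mod p)"
    by (rule digit_sum_eq_sum_below[OF p a_less])
  also have "\<dots> = a mod p + (\<Sum>i<a. (a div p div p ^ i) mod p)"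
    by (simp only: sum.lessThan_Suc_shift power_Suc div_mult2_eq power_0 div_by_1)
  also have "(\<Sum>i<a. (a div p div p ^ i) mod p) = digit_sum p (a div p)"
    by (rule digit_sum_eq_sum_below[OF p div_less, symmetric])
  finally show ?thesis .
qed

lemma digit_sum_0: "digit_sum p 0 = 0"
  by (simp add: digit_sum_def)

lemma digit_sum_append_digit:
  assumes p: "p \<ge> 2" and r: "r < p"
  shows "digit_sum p (r + p * q) = r + digit_sum p q"
  using digit_sum_rec[OF p, of "r + p * q"] r by simp

lemma digit_sum_pow:
  assumes p: "p \<ge> 2"
  shows "digit_sum p (p ^ j) = 1"
proof (induction j)
  case 0
  show ?case using digit_sum_append_digit[OF p, of 1 0] p by (simp add: digit_sum_0)
next
  case (Suc j)
  then show ?case using digit_sum_append_digit[OF p, of 0 "p ^ j"] p by simp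
qed

text \<open>Adding one raises the digit sum by at most one (a carry resets a digit p-1 to 0).\<close>
lemma digit_sum_Suc_le:
  assumes p: "p \<ge> 2"
  shows "digit_sum p (Suc x) \<le> Suc (digit_sum p x)"
proof (induction x rule: less_induct)
  case (less x)
  have x_digits: "digit_sum p x = x mod p + digit_sum p (x div p)"
    by (rule digit_sum_rec[OF p])
  show ?case
  proof (cases "Suc (x mod p) < p")
    case True
    have "Suc x = Suc (x mod p) + p * (x div p)" by simp
    then have "digit_sum p (Suc x) = Suc (x mod p) + digit_sum p (x div p)"
      using digit_sum_append_digit[OF p True] by metis
    then show ?thesis using x_digits by simp
  next
    case False
    then have last_digit: "Suc (x mod p) = p"
      using mod_less_divisor[of p x] p by linarith
    have "x \<noteq> 0"
    proof
      assume "x = 0"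
      with last_digit p show False by simp
    qed
    then have IH: "digit_sum p (Suc (x div p)) \<le> Suc (digit_sum p (x div p))"
      using less.IH p by simp
    have "Suc x = Suc (x mod p) + p * (x div p)" by simp
    then have "Suc x = 0 + p * Suc (x div p)"
      using last_digit by simp
    then have "digit_sum p (Suc x) = digit_sum p (Suc (x div p))"
      using digit_sum_append_digit[OF p, of 0 "Suc (x div p)"] p by simp
    then show ?thesis using IH x_digits last_digit by linarith
  qed
qed

text \<open>Subadditivity of the digit sum: digit-wise addition only loses p-1 per carry.\<close>
lemma digit_sum_add_le:
  assumes p: "p \<ge> 2"
  shows "digit_sum p (b + c) \<le> digit_sum p b + digit_sum p c"
proof (induction b arbitrary: c rule: less_induct)
  case (less b)
  show ?case
  proof (cases "b = 0")
    case True
    then show ?thesis by (simp add: digit_sum_0)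
  next
    case False
    define r where "r = b mod p + c mod p"
    define q where "q = b div p + c div p"
    have IH: "digit_sum p q \<le> digit_sum p (b div p) + digit_sum p (c div p)"
      unfolding q_def using less.IH False p by simp
    have digits: "digit_sum p b + digit_sum p c = r + digit_sum p (b div p) + digit_sum p (c div p)"
      using digit_sum_rec[OF p, of b] digit_sum_rec[OF p, of c] by (simp add: r_def)
    have sum_split: "b + c = r + p * q"
      unfolding r_def q_def by (simp add: algebra_simps)
    show ?thesis
    proof (cases "r < p")
      case True
      then have "digit_sum p (b + c) = r + digit_sum p q"
        using sum_split digit_sum_append_digit[OF p] by simp
      then show ?thesis using IH digits by linarith
    next
      case False
      have carry: "b + c = (r - p) + p * Suc q" using sum_split False by simp
      have "b mod p < p" "c mod p < p" using p by simp_all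
      then have "r - p < p" unfolding r_def by linarith
      then have "digit_sum p (b + c) = (r - p) + digit_sum p (Suc q)"
        unfolding carry by (rule digit_sum_append_digit[OF p])
      also have "\<dots> \<le> (r - p) + Suc (digit_sum p q)"
        using digit_sum_Suc_le[OF p] by simp
      finally show ?thesis using IH digits False p by linarith
    qed
  qed
qed

section \<open>Polynomials supported on exponents of bounded digit sum\<close>

definition digit_bounded :: "nat \<Rightarrow> nat \<Rightarrow> 'a::field poly set" where
  "digit_bounded p n = {f. \<forall>b. coeff f b \<noteq> 0 \<longrightarrow> digit_sum p b \<le> n}"

lemma digit_bounded_subspace: "poly_module.subspace (digit_bounded p n)"
  unfolding poly_module.subspace_def digit_bounded_def by (auto, metis add.right_neutral)

lemma digit_bounded_mono: "s \<le> n \<Longrightarrow> digit_bounded p s \<subseteq> digit_bounded p n"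
  unfolding digit_bounded_def by auto

lemma one_digit_bounded: "1 \<in> digit_bounded p n"
  unfolding digit_bounded_def by (auto simp: coeff_1 digit_sum_0 split: if_splits)

text \<open>D_s * D_t <= D_(s+t), by subadditivity of the digit sum.\<close>
lemma digit_bounded_mult:
  assumes p: "p \<ge> 2" and f: "f \<in> digit_bounded p s" and g: "g \<in> digit_bounded p t"
  shows "f * g \<in> digit_bounded p (s + t)"
  unfolding digit_bounded_def
proof (intro CollectI allI impI)
  fix b
  assume "coeff (f * g) b \<noteq> 0"
  then obtain i where i: "i \<le> b" "coeff f i * coeff g (b - i) \<noteq> 0"
    unfolding coeff_mult by (meson atMost_iff sum.neutral)
  then have "digit_sum p i \<le> s" "digit_sum p (b - i) \<le> t"
    using f g unfolding digit_bounded_def by auto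
  moreover have "digit_sum p b \<le> digit_sum p i + digit_sum p (b - i)"
    using digit_sum_add_le[OF p, of i "b - i"] i(1) by simp
  ultimately show "digit_sum p b \<le> s + t" by linarith
qed

text \<open>Additive polynomials only involve exponents p^j, whose digit sum is 1.\<close>
lemma additive_poly_digit_bounded:
  assumes p: "p \<ge> 2" and f: "additive_poly p (f::'a::field poly)"
  shows "f \<in> digit_bounded p 1"
proof -
  obtain c N where f_eq: "f = (\<Sum>j<N. monom (c j) (p ^ j))"
    using f unfolding additive_poly_def by blast
  show ?thesis unfolding digit_bounded_def
  proof (intro CollectI allI impI)
    fix b
    assume "coeff f b \<noteq> 0"
    then obtain j where "coeff (monom (c j) (p ^ j)) b \<noteq> 0"
      unfolding f_eq coeff_sum by (meson sum.neutral)
    then have "b = p ^ j" by (simp add: coeff_monom split: if_splits)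
    then show "digit_sum p b \<le> 1" using digit_sum_pow[OF p] by simp
  qed
qed

lemma prod_additive_digit_bounded:
  assumes p: "p \<ge> 2" and fs: "list_all (additive_poly p) fs"
  shows "prod_list fs \<in> (digit_bounded p (length fs) :: 'a::field poly set)"
  using fs
proof (induction fs)
  case Nil
  then show ?case by (simp add: one_digit_bounded)
next
  case (Cons f fs)
  then have "f * prod_list fs \<in> digit_bounded p (1 + length fs)"
    using digit_bounded_mult[OF p additive_poly_digit_bounded[OF p]] by auto
  then show ?case by simp
qed

section \<open>The two inclusions\<close>

lemma Sigma_subset_digit_bounded:
  assumes p: "p \<ge> 2"
  shows "Sigma p n \<subseteq> (digit_bounded p n :: 'a::field poly set)"
  unfolding Sigma_def
proof (rule poly_module.span_minimal[OF _ digit_bounded_subspace])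
  show "insert 1 {prod_list fs |fs. length fs \<le> n \<and> list_all (additive_poly p) fs}
        \<subseteq> digit_bounded p n"
    using prod_additive_digit_bounded[OF p] digit_bounded_mono one_digit_bounded by blast
qed

lemma monom_pow_additive: "additive_poly p (monom (1::'a::field) (p ^ m))"
  unfolding additive_poly_def
proof (intro exI)
  show "monom (1::'a) (p ^ m) = (\<Sum>j<Suc m. monom (if j = m then 1 else 0) (p ^ j))"
    by (simp add: sum.lessThan_Suc)
qed

text \<open>Lower bound: X^(p^m a) is a product of S(a) additive monomials X^(p^i), one factor
  X^(p^(m+i)) for each unit of the i-th digit of a.\<close>
lemma monom_as_additive_prod:
  assumes p: "p \<ge> 2"
  shows "\<exists>fs. length fs = digit_sum p a \<and> list_all (additive_poly p) fs
              \<and> prod_list fs = monom (1::'a::field) (p ^ m * a)"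
proof (induction a arbitrary: m rule: less_induct)
  case (less a)
  show ?case
  proof (cases "a = 0")
    case True
    then show ?thesis by (intro exI[of _ "[]"]) (simp add: digit_sum_0)
  next
    case False
    then have "a div p < a" using p by simp
    then obtain fs where fs: "length fs = digit_sum p (a div p)"
      "list_all (additive_poly p) fs" "prod_list fs = monom (1::'a) (p ^ Suc m * (a div p))"
      using less.IH by blast
    let ?gs = "replicate (a mod p) (monom (1::'a) (p ^ m)) @ fs"
    have "p ^ m * (a mod p) + p ^ Suc m * (a div p) = p ^ m * a"
    proof -
      have "p ^ m * (a mod p) + p ^ Suc m * (a div p) = p ^ m * (a mod p + p * (a div p))"
        by (simp only: distrib_left power_Suc ac_simps)
      also have "\<dots> = p ^ m * a" by simp
      finally show ?thesis .
    qed
    then have "prod_list ?gs = monom 1 (p ^ m * a)"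
      using fs(3) by (simp add: monom_power mult_monom)
    then show ?thesis using fs digit_sum_rec[OF p, of a]
      by (intro exI[of _ ?gs]) (auto simp: monom_pow_additive list_all_iff)
  qed
qed

lemma monom_in_Sigma_iff:
  assumes p: "p \<ge> 2"
  shows "monom (1::'a::field) a \<in> Sigma p n \<longleftrightarrow> digit_sum p a \<le> n"
proof
  assume "monom (1::'a) a \<in> Sigma p n"
  then have "monom (1::'a) a \<in> digit_bounded p n"
    using Sigma_subset_digit_bounded[OF p] by blast
  then show "digit_sum p a \<le> n" unfolding digit_bounded_def by simp
next
  assume le: "digit_sum p a \<le> n"
  obtain fs where fs: "length fs = digit_sum p a" "list_all (additive_poly p) fs"
      "prod_list fs = monom (1::'a) a"
    using monom_as_additive_prod[OF p, of a 0] by auto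
  then have "monom (1::'a) a \<in> insert 1 {prod_list fs |fs. length fs \<le> n \<and> list_all (additive_poly p) fs}"
    using le by (metis (mono_tags, lifting) insertCI mem_Collect_eq)
  then show "monom (1::'a) a \<in> Sigma p n"
    unfolding Sigma_def by (rule poly_module.span_base)
qed

text \<open>The theorem: primality gives p >= 2.\<close>
theorem lemma3p5:
  fixes p a n :: nat
  assumes "prime p"
    and "CHAR('k::alg_closed_field) = p"
  shows "((monom (1::'k) a \<in> Sigma p n) \<longleftrightarrow> digit_sum p a \<le> n)
         \<and> (LEAST m. monom (1::'k) a \<in> Sigma p m) = digit_sum p a"
proof -
  have p: "p \<ge> 2" using assms(1) by (simp add: prime_ge_2_nat)
  note iff = monom_in_Sigma_iff[OF p, where 'a='k]
  have "(LEAST m. monom (1::'k) a \<in> Sigma p m) = digit_sum p a"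
    by (rule Least_equality) (simp_all add: iff)
  with iff show ?thesis by blast
qed

end
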